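(* If $v\in\widehat T_n\setminus\{e\}$, then there exist $w',w''\in E_n$ with $w'\succeq\mathrm{par}(v)$, $w''\succeq v$ and $$c\big[\|\mathrm{conf}(w')\|_{L,r}+\|\mathrm{conf}(w'')\|_{L,r}\big]<\|d(\hat p_n(\cdot|w'),\hat p_n(\cdot|w''))\|_{L,k}.$$
   Context: $A$ is a finite alphabet; strings $w=w_{-j}\cdots w_{-1}$ over $A$; $e$ is the empty string; $w\preceq w'$ ($w'\succeq w$) means $w$ is a suffix of $w'$; $\mathrm{par}(w_{-j}\cdots w_{-1})=w_{-j+1}\cdots w_{-1}$. A tree is a set of strings containing $e$ and closed under $\mathrm{par}$; a leaf is an element that is the parent of no element. Data: for $\ell=1,\dots,L$ a sample $X_1^n(\ell)\in A^n$; $N_{j,\ell}(w)$ is the number of occurrences of $w$ as a block of consecutive symbols in $X_1^j(\ell)$; $\hat p_{n,\ell}(a|w)=N_{n,\ell}(wa)/N_{n-1,\ell}(w)$ when $\min_\ell N_{n-1,\ell}(w)>0$. Metrics $d_\ell$ on distributions over $A$, $d(q,q')=(d_\ell(q_\ell,q'_\ell))_\ell$, $\hat p_n(\cdot|w)=(\hat p_{n,\ell}(\cdot|w))_\ell$; confidence radii $\mathrm{conf}(w)\in[0,1]^L$; $\|v\|_{L,q}=(\frac1L\sum_\ell|v_\ell|^q)^{1/q}$; fixed $k,r\ge1$ and $c>1$. $E_n=\{w:\min_\ell N_{n-1,\ell}(w)>0\}$. For nonempty $w\in E_n$, $\mathsf{CanRmv}(w)=1$ iff for all $w',w''\in E_n$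 with $w\preceq w'$ and $\mathrm{par}(w)\preceq w''$: $\|d(\hat p_n(\cdot|w'),\hat p_n(\cdot|w''))\|_{L,k}\le c\|\mathrm{conf}(w')\|_{L,r}+c\|\mathrm{conf}(w'')\|_{L,r}$; otherwise $0$. PruneTree: start with $\widehat T_n=E_n$ and all nodes unexamined; while $\widehat T_n$ has an unexamined leaf $w$ ($w\neq e$), remove $w$ from $\widehat T_n$ if $\mathsf{CanRmv}(w)=1$, and mark $w$ examined; output $\widehat T_n$. *)

theory Defs
  imports Complex_Main "HOL-Library.Sublist"
begin

text \<open>Strings w = w_{-j} ... w_{-1} are lists [w_{-j}, ..., w_{-1}] (oldest symbol first).
  The suffix order w \<preceq> w' is Sublist.suffix w w'; par = tl; the empty string e is [].
  Samples: X l i is the i-th symbol (i = 1..n) of the l-th sample.\<close>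

definition par :: "'a list \<Rightarrow> 'a list" where
  "par w = tl w"

definition occ :: "(nat \<Rightarrow> 'a) \<Rightarrow> nat \<Rightarrow> 'a list \<Rightarrow> nat" where
  "occ x j w = card {i. 1 \<le> i \<and> i + length w \<le> j + 1 \<and> (\<forall>t<length w. x (i + t) = w ! t)}"

definition phat :: "(nat \<Rightarrow> nat \<Rightarrow> 'a) \<Rightarrow> nat \<Rightarrow> nat \<Rightarrow> 'a list \<Rightarrow> 'a \<Rightarrow> real" where
  "phat X n l w a = real (occ (X l) n (w @ [a])) / real (occ (X l) (n - 1) w)"

definition En :: "(nat \<Rightarrow> nat \<Rightarrow> 'a) \<Rightarrow> nat \<Rightarrow> nat \<Rightarrow> 'a list set" where
  "En X L n = {w. \<forall>l\<in>{1..L}. 0 < occ (X l) (n - 1) w}"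

definition normLq :: "nat \<Rightarrow> real \<Rightarrow> (nat \<Rightarrow> real) \<Rightarrow> real" where
  "normLq L q v = ((1 / real L) * (\<Sum>l = 1..L. \<bar>v l\<bar> powr q)) powr (1 / q)"

definition dvec :: "(nat \<Rightarrow> ('a \<Rightarrow> real) \<Rightarrow> ('a \<Rightarrow> real) \<Rightarrow> real) \<Rightarrow>
    (nat \<Rightarrow> nat \<Rightarrow> 'a) \<Rightarrow> nat \<Rightarrow> 'a list \<Rightarrow> 'a list \<Rightarrow> nat \<Rightarrow> real" where
  "dvec d X n w' w'' = (\<lambda>l. d l (phat X n l w') (phat X n l w''))"

definition prob_dist :: "('a::finite \<Rightarrow> real) \<Rightarrow> bool" where
  "prob_dist q \<longleftrightarrow> (\<forall>a. 0 \<le> q a) \<and> sum q UNIV = 1"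

definition is_metric_on :: "'b set \<Rightarrow> ('b \<Rightarrow> 'b \<Rightarrow> real) \<Rightarrow> bool" where
  "is_metric_on S m \<longleftrightarrow>
     (\<forall>p\<in>S. \<forall>q\<in>S. 0 \<le> m p q \<and> (m p q = 0 \<longleftrightarrow> p = q) \<and> m p q = m q p) \<and>
     (\<forall>p\<in>S. \<forall>q\<in>S. \<forall>s\<in>S. m p s \<le> m p q + m q s)"

definition CanRmv :: "(nat \<Rightarrow> nat \<Rightarrow> 'a) \<Rightarrow> nat \<Rightarrow> nat \<Rightarrow>
    (nat \<Rightarrow> ('a \<Rightarrow> real) \<Rightarrow> ('a \<Rightarrow> real) \<Rightarrow> real) \<Rightarrow> ('a list \<Rightarrow> nat \<Rightarrow> real) \<Rightarrow>
    real \<Rightarrow> real \<Rightarrow> real \<Rightarrow> 'a list \<Rightarrow> bool" where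
  "CanRmv X L n d conf k r c w \<longleftrightarrow>
     (\<forall>w'\<in>En X L n. \<forall>w''\<in>En X L n. suffix w w' \<longrightarrow> suffix (par w) w'' \<longrightarrow>
        normLq L k (dvec d X n w' w'') \<le> c * normLq L r (conf w') + c * normLq L r (conf w''))"

definition is_leaf :: "'a list set \<Rightarrow> 'a list \<Rightarrow> bool" where
  "is_leaf T w \<longleftrightarrow> w \<in> T \<and> (\<forall>u\<in>T. u \<noteq> [] \<longrightarrow> par u \<noteq> w)"

text \<open>One step of PruneTree on states (current tree, set of examined nodes),
  removal predicate P (= CanRmv).\<close>
inductive prune_step :: "('a list \<Rightarrow> bool) \<Rightarrow> 'a list set \<times> 'a list set \<Rightarrow> 'a list set \<times> 'a list set \<Rightarrow> bool"
  for P where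
  "\<lbrakk>is_leaf T w; w \<noteq> []; w \<notin> M\<rbrakk> \<Longrightarrow>
     prune_step P (T, M) (if P w then T - {w} else T, insert w M)"

text \<open>T is a possible output of PruneTree: reachable from (E_n, no node examined) and
  with no unexamined nonempty leaf left (any order of examination).\<close>
definition prune_output :: "(nat \<Rightarrow> nat \<Rightarrow> 'a) \<Rightarrow> nat \<Rightarrow> nat \<Rightarrow>
    (nat \<Rightarrow> ('a \<Rightarrow> real) \<Rightarrow> ('a \<Rightarrow> real) \<Rightarrow> real) \<Rightarrow> ('a list \<Rightarrow> nat \<Rightarrow> real) \<Rightarrow>
    real \<Rightarrow> real \<Rightarrow> real \<Rightarrow> 'a list set \<Rightarrow> bool" where
  "prune_output X L n d conf k r c T \<longleftrightarrow>
     (\<exists>M. (prune_step (CanRmv X L n d conf k r c))\<^sup>*\<^sup>* (En X L n, {}) (T, M) \<and>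
          \<not> (\<exists>w. is_leaf T w \<and> w \<noteq> [] \<and> w \<notin> M))"

end

theory Submission
  imports Defs
begin

text \<open>Every node v surviving the pruning has a descendant u (v \<preceq> u) that was examined
  and kept: follow children of v inside the output tree until reaching a leaf, which must
  have been examined; since lengths in E_n are bounded this terminates. Examined nodes
  that are kept are exactly those with CanRmv = 0, so some pair w' \<succeq> u \<succeq> v and
  w'' \<succeq> par u \<succeq> par v violates the CanRmv inequality; swapping the roles of w' and
  w'' uses the symmetry of the metrics d_l on the empirical distributions.\<close>

definition occurrences :: "(nat \<Rightarrow> 'a) \<Rightarrow> nat \<Rightarrow> 'a list \<Rightarrow> nat set" where
  "occurrences x j w = {i. 1 \<le> i \<and> i + length w \<le> j + 1 \<and> (\<forall>t<length w. x (i + t) = w ! t)}"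

lemma occ_eq_card_occurrences: "occ x j w = card (occurrences x j w)"
  unfolding occ_def occurrences_def ..

lemma finite_occurrences: "finite (occurrences x j w)"
  by (rule finite_subset[of _ "{..j + 1}"]) (auto simp: occurrences_def)

lemma occ_pos_length_le:
  assumes "0 < occ x j w"
  shows "length w \<le> j"
proof -
  from assms obtain i where "i \<in> occurrences x j w"
    unfolding occ_eq_card_occurrences by (metis card.empty ex_in_conv less_irrefl)
  then show ?thesis by (auto simp: occurrences_def)
qed

lemma occurrences_snoc:
  "occurrences x (Suc j) (w @ [a]) = {i \<in> occurrences x j w. x (i + length w) = a}"
  by (auto simp: occurrences_def nth_append less_Suc_eq)

lemma sum_occ_snoc:
  fixes x :: "nat \<Rightarrow> 'a::finite"
  shows "(\<Sum>a\<in>UNIV. occ x (Suc j) (w @ [a])) = occ x j w"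
  using sum_fun_comp[OF finite_occurrences[of x j w] finite_UNIV subset_UNIV,
      where f = "\<lambda>_. 1::nat" and g = "\<lambda>i. x (i + length w)"]
  by (simp add: occ_eq_card_occurrences occurrences_snoc)

lemma prob_dist_phat:
  fixes X :: "nat \<Rightarrow> nat \<Rightarrow> 'a::finite"
  assumes "0 < n" and "0 < occ (X l) (n - 1) w"
  shows "prob_dist (phat X n l w)"
proof -
  have "(\<Sum>a\<in>UNIV. real (occ (X l) n (w @ [a]))) = real (occ (X l) (n - 1) w)"
    using sum_occ_snoc[of "X l" "n - 1" w] assms(1) by (simp flip: of_nat_sum)
  then have "sum (phat X n l w) UNIV = 1"
    using assms(2) by (simp add: phat_def flip: sum_divide_distrib)
  then show ?thesis
    by (simp add: prob_dist_def phat_def)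
qed

lemma En_length_le:
  assumes "w \<in> En X L n" and "1 \<le> L"
  shows "length w \<le> n - 1"
  using assms by (auto simp: En_def intro: occ_pos_length_le)

lemma suffix_tl_mono: "suffix v u \<Longrightarrow> suffix (tl v) (tl u)"
  by (metis suffix_def suffix_order.trans suffix_tl append_Nil list.sel(3) tl_append2)

lemma prune_steps_invariant:
  assumes "(prune_step P)\<^sup>*\<^sup>* (E, {}) (T, M)"
  shows "T \<subseteq> E" and "\<And>w. w \<in> M \<Longrightarrow> w \<in> T \<Longrightarrow> \<not> P w"
proof -
  from assms have "T \<subseteq> E \<and> (\<forall>w\<in>M. w \<in> T \<longrightarrow> \<not> P w)"
  proof (induction "(T, M)" arbitrary: T M rule: rtranclp_induct)
    case (step s T M)
    obtain T0 M0 where s: "s = (T0, M0)" by fastforce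
    from step.hyps(2)[unfolded s] show ?case
      by cases (use step.hyps(3)[OF s] in auto)
  qed auto
  then show "T \<subseteq> E" and "\<And>w. w \<in> M \<Longrightarrow> w \<in> T \<Longrightarrow> \<not> P w" by auto
qed

lemma exists_examined_extension:
  assumes leaves: "\<And>w. is_leaf T w \<Longrightarrow> w \<noteq> [] \<Longrightarrow> w \<in> M"
    and bounded: "\<And>u. u \<in> T \<Longrightarrow> length u \<le> N"
    and "v \<in> T" and "v \<noteq> []"
  shows "\<exists>u\<in>T. u \<in> M \<and> suffix v u"
  using assms(3,4)
proof (induction "N - length v" arbitrary: v rule: less_induct)
  case less
  show ?case
  proof (cases "is_leaf T v")
    case True
    then show ?thesis using leaves less.prems by blast
  next
    case False
    then obtain u where u: "u \<in> T" "u \<noteq> []" "par u = v"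
      using less.prems unfolding is_leaf_def by blast
    then have "u = hd u # v"
      by (metis list.collapse par_def)
    then have "length u = Suc (length v)" and "suffix v u"
      by (metis length_Cons, metis suffix_ConsI suffix_order.refl)
    moreover have "length u \<le> N" using bounded u(1) .
    ultimately show ?thesis
      using less.hyps[of u] u suffix_order.trans by fastforce
  qed
qed

lemma normLq_cong:
  assumes "\<And>l. l \<in> {1..L} \<Longrightarrow> v l = w l"
  shows "normLq L q v = normLq L q w"
proof -
  have "(\<Sum>l = 1..L. \<bar>v l\<bar> powr q) = (\<Sum>l = 1..L. \<bar>w l\<bar> powr q)"
    by (rule sum.cong) (simp_all add: assms)
  then show ?thesis by (simp add: normLq_def)
qed

lemma dvec_commute:
  fixes X :: "nat \<Rightarrow> nat \<Rightarrow> 'a::finite"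
  assumes metric: "\<forall>l\<in>{1..L}. is_metric_on {q. prob_dist q} (d l)"
    and "0 < n" and "w' \<in> En X L n" and "w'' \<in> En X L n" and "l \<in> {1..L}"
  shows "dvec d X n w' w'' l = dvec d X n w'' w' l"
proof -
  have "prob_dist (phat X n l w')" and "prob_dist (phat X n l w'')"
    using assms(3-5) by (simp_all add: En_def prob_dist_phat[OF \<open>0 < n\<close>])
  then show ?thesis
    using metric assms(5) by (simp add: dvec_def is_metric_on_def)
qed

theorem propositionA2:
  fixes X :: "nat \<Rightarrow> nat \<Rightarrow> 'a::finite"
    and L n :: nat
    and d :: "nat \<Rightarrow> ('a \<Rightarrow> real) \<Rightarrow> ('a \<Rightarrow> real) \<Rightarrow> real"
    and conf :: "'a list \<Rightarrow> nat \<Rightarrow> real"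
    and k r c :: real
    and T :: "'a list set"
    and v :: "'a list"
  assumes "1 \<le> L"
    and "\<forall>l\<in>{1..L}. is_metric_on {q. prob_dist q} (d l)"
    and "\<forall>w. \<forall>l\<in>{1..L}. 0 \<le> conf w l \<and> conf w l \<le> 1"
    and "1 \<le> k" and "1 \<le> r" and "1 < c"
    and "prune_output X L n d conf k r c T"
    and "v \<in> T" and "v \<noteq> []"
  shows "\<exists>w'\<in>En X L n. \<exists>w''\<in>En X L n. suffix (par v) w' \<and> suffix v w'' \<and>
           c * (normLq L r (conf w') + normLq L r (conf w'')) < normLq L k (dvec d X n w' w'')"
proof -
  obtain M where steps: "(prune_step (CanRmv X L n d conf k r c))\<^sup>*\<^sup>* (En X L n, {}) (T, M)"
    and leaves: "\<And>w. is_leaf T w \<Longrightarrow> w \<noteq> [] \<Longrightarrow> w \<in> M"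
    using assms(7) unfolding prune_output_def by blast
  note T_sub_En = prune_steps_invariant(1)[OF steps]
  have "length v \<le> n - 1" using En_length_le assms(1,8) T_sub_En by blast
  with assms(9) have "0 < n" by (cases v) auto
  obtain u where "u \<in> T" "u \<in> M" "suffix v u"
    using exists_examined_extension[OF leaves _ assms(8,9)] En_length_le[OF _ assms(1)] T_sub_En
    by blast
  then have "\<not> CanRmv X L n d conf k r c u"
    using prune_steps_invariant(2)[OF steps] by blast
  then obtain w1 w2 where w: "w1 \<in> En X L n" "w2 \<in> En X L n" "suffix u w1" "suffix (par u) w2"
    and violated: "c * normLq L r (conf w1) + c * normLq L r (conf w2) < normLq L k (dvec d X n w1 w2)"
    unfolding CanRmv_def by auto
  have "normLq L k (dvec d X n w1 w2) = normLq L k (dvec d X n w2 w1)"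
    using normLq_cong dvec_commute[OF assms(2) \<open>0 < n\<close> w(1,2)] by blast
  with violated have "c * (normLq L r (conf w2) + normLq L r (conf w1)) < normLq L k (dvec d X n w2 w1)"
    by (simp add: distrib_left)
  moreover have "suffix (par v) w2"
    using suffix_tl_mono[OF \<open>suffix v u\<close>] w(4) unfolding par_def by (rule suffix_order.trans)
  moreover have "suffix v w1"
    using \<open>suffix v u\<close> w(3) by (rule suffix_order.trans)
  ultimately show ?thesis
    using w(1,2) by blast
qed

end
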